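(* Fix $m\in\mathbb N$ and $\xi\in\mathbb R^m$, and let $\rho=\sqrt{\log m+1}\,\|\xi\|$. For every integer $k\geq1$ with $k\geq 2m\rho$, $$\Big|\big(\widehat{e^{2\operatorname{Im}g_+}}\big)_k\Big|\leq 2e^{\rho}\frac{\rho^{\lceil k/m\rceil}}{\lceil k/m\rceil!}.$$
   Context: $g_+(\theta)=\sum_{j=1}^m\frac{\xi_j}{\sqrt j}e^{ij\theta}$, so $\operatorname{Im}g_+(\theta)=\sum_{j=1}^m\frac{\xi_j}{\sqrt j}\sin j\theta$. For a function $c$ on $[-\pi,\pi]$, $\hat c_k=\frac1{2\pi}\int_{-\pi}^{\pi}c(\theta)e^{-ik\theta}d\theta$. $\log$ is natural. *)

theory Defs
  imports "HOL-Analysis.Analysis"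
begin

definition g_plus :: "nat \<Rightarrow> (nat \<Rightarrow> real) \<Rightarrow> real \<Rightarrow> complex" where
  "g_plus m \<xi> \<theta> = (\<Sum>j=1..m. complex_of_real (\<xi> j / sqrt (real j)) * exp (\<i> * of_nat j * complex_of_real \<theta>))"

definition fourier_coeff :: "(real \<Rightarrow> complex) \<Rightarrow> int \<Rightarrow> complex" where
  "fourier_coeff c k = complex_of_real (1 / (2 * pi)) *
     integral {-pi..pi} (\<lambda>\<theta>. c \<theta> * exp (- (\<i> * of_int k * complex_of_real \<theta>)))"

definition vec_norm :: "nat \<Rightarrow> (nat \<Rightarrow> real) \<Rightarrow> real" where
  "vec_norm m \<xi> = sqrt (\<Sum>j=1..m. (\<xi> j)^2)"

end

theory Submission
  imports Defs
begin

text \<open>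
  Write \<open>2 Im g\<^sub>+ = w + v\<close> with \<open>w = -\<i> g\<^sub>+\<close>, whose frequencies lie in \<open>1..m\<close>, and
  \<open>v = \<i> conj g\<^sub>+\<close>, whose frequencies are negative; by Cauchy-Schwarz and
  \<open>\<Sum>j\<le>m. 1/j \<le> log m + 1\<close> both are bounded by \<open>\<rho>\<close>. Truncating the exponential series of
  \<open>exp w\<close> before degree \<open>N = \<lceil>k/m\<rceil>\<close> leaves a trigonometric polynomial \<open>T\<close> with frequencies
  below \<open>k\<close>, so the \<open>k\<close>-th coefficient of \<open>T exp v\<close> vanishes. What remains is
  \<open>(exp w - T) exp v\<close>, bounded by \<open>e\<^sup>\<rho>\<close> times the tail \<open>\<Sum>n\<ge>N. \<rho>\<^sup>n/n!\<close>, and since \<open>N \<ge> 2\<rho>\<close>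
  this tail is dominated by a geometric series with sum \<open>2 \<rho>\<^sup>N/N!\<close>.
\<close>

lemma has_integral_exp_int:
  fixes n :: int
  assumes "n \<noteq> 0"
  shows "((\<lambda>\<theta>::real. exp (\<i> * of_int n * of_real \<theta>)) has_integral 0) {-pi..pi}"
proof -
  have "((\<lambda>x::real. exp (\<i> * of_int n * of_real x) / (\<i> * of_int n)) has_vector_derivative
          exp (\<i> * of_int n * of_real x)) (at x within {-pi..pi})" for x
  proof -
    have "((\<lambda>z. exp (\<i> * of_int n * z) / (\<i> * of_int n)) has_field_derivative
            exp (\<i> * of_int n * of_real x)) (at (of_real x) within of_real ` {-pi..pi})"
      using assms by (auto intro!: derivative_eq_intros)
    moreover have "((\<lambda>x::real. complex_of_real x) has_vector_derivative 1) (at x within {-pi..pi})"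
      by (auto intro!: derivative_eq_intros)
    ultimately show ?thesis
      using field_vector_diff_chain_within by (fastforce simp: o_def)
  qed
  then have "((\<lambda>\<theta>::real. exp (\<i> * of_int n * of_real \<theta>)) has_integral
      exp (\<i> * of_int n * of_real pi) / (\<i> * of_int n) - exp (\<i> * of_int n * of_real (-pi)) / (\<i> * of_int n))
      {-pi..pi}"
    by (intro fundamental_theorem_of_calculus) auto
  moreover have "exp (\<i> * of_int n * of_real pi) = exp (\<i> * of_int n * of_real (-pi)) * exp ((2 * of_int n * pi) * \<i>)"
    unfolding exp_add[symmetric] by (simp add: algebra_simps)
  moreover have "exp ((2 * of_int n * pi) * \<i>) = 1"
    by (rule exp_integer_2pi) simp
  ultimately show ?thesis by simp
qed

lemma integrable_fourier_integrand:
  assumes "continuous_on {-pi..pi} f"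
  shows "(\<lambda>\<theta>. f \<theta> * exp (- (\<i> * of_int k * of_real \<theta>))) integrable_on {-pi..pi}"
  using assms by (intro integrable_continuous_interval) (auto intro!: continuous_intros)

lemma fourier_coeff_add:
  assumes "continuous_on {-pi..pi} f" "continuous_on {-pi..pi} g"
  shows "fourier_coeff (\<lambda>\<theta>. f \<theta> + g \<theta>) k = fourier_coeff f k + fourier_coeff g k"
  using integrable_fourier_integrand[OF assms(1)] integrable_fourier_integrand[OF assms(2)]
  by (simp add: fourier_coeff_def distrib_right distrib_left integral_add)

lemma norm_fourier_coeff_le:
  assumes "continuous_on {-pi..pi} f" "\<And>\<theta>. \<theta> \<in> {-pi..pi} \<Longrightarrow> cmod (f \<theta>) \<le> B"
  shows "cmod (fourier_coeff f k) \<le> B"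
proof -
  have "cmod (integral {-pi..pi} (\<lambda>\<theta>. f \<theta> * exp (- (\<i> * of_int k * of_real \<theta>)))) \<le> B * (pi - - pi)"
    using assms
    by (intro integral_bound) (auto intro!: continuous_intros simp: norm_mult norm_exp_eq_Re)
  then show ?thesis
    by (simp add: fourier_coeff_def norm_mult norm_divide pi_gt_zero divide_le_eq)
qed

subsection \<open>Trigonometric polynomials with frequencies bounded above\<close>

text \<open>Only an upper bound is imposed: the frequencies may be arbitrarily negative.\<close>

inductive trig_poly_le :: "int \<Rightarrow> (real \<Rightarrow> complex) \<Rightarrow> bool" for d where
  trig_poly_le_monomial: "s \<le> d \<Longrightarrow> trig_poly_le d (\<lambda>\<theta>. c * exp (\<i> * of_int s * of_real \<theta>))"
| trig_poly_le_add: "trig_poly_le d f \<Longrightarrow> trig_poly_le d g \<Longrightarrow> trig_poly_le d (\<lambda>\<theta>. f \<theta> + g \<theta>)"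

lemma trig_poly_le_mono: "trig_poly_le d f \<Longrightarrow> d \<le> d' \<Longrightarrow> trig_poly_le d' f"
  by (induction rule: trig_poly_le.induct) (auto intro: trig_poly_le.intros)

lemma trig_poly_le_const: "trig_poly_le 0 (\<lambda>_. c)"
  using trig_poly_le_monomial[of 0 0 c] by simp

lemma trig_poly_le_zero: "trig_poly_le d (\<lambda>_. 0)"
  using trig_poly_le_monomial[of d d 0] by simp

lemma trig_poly_le_mult:
  "trig_poly_le d1 f \<Longrightarrow> trig_poly_le d2 g \<Longrightarrow> trig_poly_le (d1 + d2) (\<lambda>\<theta>. f \<theta> * g \<theta>)"
proof (induction rule: trig_poly_le.induct)
  case (trig_poly_le_monomial s c)
  from trig_poly_le_monomial.prems show ?case
  proof (induction rule: trig_poly_le.induct)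
    case (trig_poly_le_monomial s' c')
    have "trig_poly_le (d1 + d2) (\<lambda>\<theta>. (c * c') * exp (\<i> * of_int (s + s') * of_real \<theta>))"
      using \<open>s \<le> d1\<close> \<open>s' \<le> d2\<close> by (intro trig_poly_le.trig_poly_le_monomial) simp
    then show ?case
      by (simp add: algebra_simps exp_add[symmetric])
  qed (auto simp: distrib_left intro: trig_poly_le.trig_poly_le_add)
qed (auto simp: distrib_right intro: trig_poly_le.trig_poly_le_add)

lemma trig_poly_le_scale: "trig_poly_le d f \<Longrightarrow> trig_poly_le d (\<lambda>\<theta>. c * f \<theta>)"
  using trig_poly_le_mult[OF trig_poly_le_const[of c]] by simp

lemma trig_poly_le_sum:
  "finite A \<Longrightarrow> (\<And>x. x \<in> A \<Longrightarrow> trig_poly_le d (f x)) \<Longrightarrow> trig_poly_le d (\<lambda>\<theta>. \<Sum>x\<in>A. f x \<theta>)"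
  by (induction rule: finite_induct) (auto intro: trig_poly_le_zero trig_poly_le_add)

lemma trig_poly_le_power: "0 \<le> d \<Longrightarrow> trig_poly_le d f \<Longrightarrow> trig_poly_le (int n * d) (\<lambda>\<theta>. f \<theta> ^ n)"
proof (induction n)
  case 0
  then show ?case using trig_poly_le_const[of 1] by simp
next
  case (Suc n)
  then have "trig_poly_le (d + int n * d) (\<lambda>\<theta>. f \<theta> * f \<theta> ^ n)"
    by (intro trig_poly_le_mult) auto
  then show ?case by (simp add: algebra_simps)
qed

lemma trig_poly_le_exp_partial_sum:
  assumes "0 \<le> d" "trig_poly_le d f"
  shows "trig_poly_le ((int n - 1) * d) (\<lambda>\<theta>. \<Sum>p<n. f \<theta> ^ p /\<^sub>R fact p)"
proof (intro trig_poly_le_sum)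
  fix p assume "p \<in> {..<n}"
  then have "int p * d \<le> (int n - 1) * d"
    using assms(1) by (intro mult_right_mono) auto
  then have "trig_poly_le ((int n - 1) * d) (\<lambda>\<theta>. of_real (1 / fact p) * f \<theta> ^ p)"
    using assms by (intro trig_poly_le_scale trig_poly_le_mono[OF trig_poly_le_power])
  then show "trig_poly_le ((int n - 1) * d) (\<lambda>\<theta>. f \<theta> ^ p /\<^sub>R fact p)"
    by (simp add: scaleR_conv_of_real divide_inverse mult.commute)
qed simp

lemma continuous_on_trig_poly_le: "trig_poly_le d f \<Longrightarrow> continuous_on S f"
  by (induction rule: trig_poly_le.induct) (auto intro!: continuous_intros)

lemma fourier_coeff_trig_poly_le:
  assumes "trig_poly_le d f" "d < k"
  shows "fourier_coeff f k = 0"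
  using assms
proof (induction rule: trig_poly_le.induct)
  case (trig_poly_le_monomial s c)
  have "(\<lambda>\<theta>. c * exp (\<i> * of_int s * of_real \<theta>) * exp (- (\<i> * of_int k * of_real \<theta>)))
      = (\<lambda>\<theta>. c * exp (\<i> * of_int (s - k) * of_real \<theta>))"
    by (simp only: mult.assoc exp_add[symmetric]) (simp add: algebra_simps)
  moreover have "((\<lambda>\<theta>. c * exp (\<i> * of_int (s - k) * of_real \<theta>)) has_integral c * 0) {-pi..pi}"
    using trig_poly_le_monomial by (intro has_integral_mult_right has_integral_exp_int) simp
  ultimately have "integral {-pi..pi}
      (\<lambda>\<theta>. c * exp (\<i> * of_int s * of_real \<theta>) * exp (- (\<i> * of_int k * of_real \<theta>))) = 0"
    by (metis integral_unique mult_zero_right)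
  then show ?case
    unfolding fourier_coeff_def by simp
next
  case (trig_poly_le_add f g)
  then show ?case
    by (simp add: fourier_coeff_add continuous_on_trig_poly_le)
qed

subsection \<open>Tails of the exponential series\<close>

definition exp_tail :: "real \<Rightarrow> nat \<Rightarrow> real" where
  "exp_tail r n = (\<Sum>q. r ^ (q + n) / fact (q + n))"

lemma summable_exp_tail: "summable (\<lambda>q. r ^ (q + n) / fact (q + n) :: real)"
proof -
  have "summable (\<lambda>q. r ^ q / fact q :: real)"
    using summable_exp_generic[of r] by (simp add: divide_inverse mult.commute)
  then show ?thesis by (rule summable_ignore_initial_segment)
qed

lemma norm_exp_minus_partial_sum_le:
  fixes z :: "'a :: {real_normed_algebra_1, banach}"
  assumes "norm z \<le> r"
  shows "norm (exp z - (\<Sum>q<n. z ^ q /\<^sub>R fact q)) \<le> exp_tail r n"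
proof -
  have "exp z - (\<Sum>q<n. z ^ q /\<^sub>R fact q) = (\<Sum>q. z ^ (q + n) /\<^sub>R fact (q + n))"
    unfolding exp_def by (simp add: suminf_minus_initial_segment[OF summable_exp_generic])
  also have "norm \<dots> \<le> exp_tail r n"
    unfolding exp_tail_def
  proof (rule norm_suminf_le[OF _ summable_exp_tail])
    fix q
    have "norm (z ^ (q + n)) \<le> r ^ (q + n)"
      using assms norm_power_ineq order_trans power_mono norm_ge_zero by metis
    then show "norm (z ^ (q + n) /\<^sub>R fact (q + n)) \<le> r ^ (q + n) / fact (q + n)"
      by (simp add: field_simps)
  qed
  finally show ?thesis .
qed

lemma exp_tail_tendsto_zero: "exp_tail r \<longlonglongrightarrow> 0"
proof -
  have s: "summable (\<lambda>n. r ^ n / fact n :: real)"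
    using summable_exp_tail[of r 0] by simp
  have "exp_tail r = (\<lambda>n. (\<Sum>q. r ^ q / fact q) - (\<Sum>q<n. r ^ q / fact q))"
    unfolding exp_tail_def using suminf_minus_initial_segment[OF s] by (auto simp: fun_eq_iff)
  moreover have "(\<lambda>n. (\<Sum>q. r ^ q / fact q) - (\<Sum>q<n. r ^ q / fact q)) \<longlonglongrightarrow> 0"
    using tendsto_diff[OF tendsto_const[of "\<Sum>q. r ^ q / fact q"] summable_LIMSEQ[OF s]] by simp
  ultimately show ?thesis by simp
qed

lemma exp_tail_le:
  assumes "0 \<le> r" "2 * r \<le> real n"
  shows "exp_tail r n \<le> 2 * r ^ n / fact n"
proof -
  have term_le: "r ^ (q + n) / fact (q + n) \<le> r ^ n / fact n * (1/2) ^ q" for q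
  proof (induction q)
    case (Suc q)
    have "r / real (Suc (q + n)) \<le> 1/2"
      using assms by (simp add: field_simps)
    then have "r ^ (q + n) / fact (q + n) * (r / real (Suc (q + n))) \<le> r ^ n / fact n * (1/2) ^ q * (1/2)"
      using Suc assms(1) by (intro mult_mono) auto
    then show ?case by (simp add: field_simps)
  qed simp
  have "exp_tail r n \<le> (\<Sum>q. r ^ n / fact n * (1/2) ^ q)"
    unfolding exp_tail_def
    by (intro suminf_le term_le summable_exp_tail summable_mult summable_geometric) auto
  also have "\<dots> = 2 * r ^ n / fact n"
    by (subst suminf_mult) (auto simp: suminf_geometric)
  finally show ?thesis .
qed

lemma fourier_coeff_mult_exp_eq_0:
  assumes T: "trig_poly_le d T" and v: "trig_poly_le 0 v" and "d < k"
    and v_le: "\<And>\<theta>. cmod (v \<theta>) \<le> r"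
  shows "fourier_coeff (\<lambda>\<theta>. T \<theta> * exp (v \<theta>)) k = 0"
proof -
  \<comment> \<open>\<open>exp v\<close> is the uniform limit of its partial sums \<open>U n\<close>, and \<open>T * U n\<close> has frequencies at most \<open>d\<close>.\<close>
  define U where "U n \<theta> = (\<Sum>q<n. v \<theta> ^ q /\<^sub>R fact q)" for n \<theta>
  obtain B where B: "\<And>\<theta>. \<theta> \<in> {-pi..pi} \<Longrightarrow> cmod (T \<theta>) \<le> B" "0 \<le> B"
    using continuous_on_compact_bound[OF compact_Icc continuous_on_trig_poly_le[OF T]] by metis
  have cont: "continuous_on {-pi..pi} f" if "trig_poly_le d' f" for d' f
    using continuous_on_trig_poly_le[OF that] .
  have "cmod (fourier_coeff (\<lambda>\<theta>. T \<theta> * exp (v \<theta>)) k) \<le> B * exp_tail r n" for n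
  proof -
    have TU: "trig_poly_le d (\<lambda>\<theta>. T \<theta> * U n \<theta>)"
      unfolding U_def using trig_poly_le_mult[OF T trig_poly_le_exp_partial_sum[OF _ v, of n]] by simp
    have "fourier_coeff (\<lambda>\<theta>. T \<theta> * exp (v \<theta>)) k
        = fourier_coeff (\<lambda>\<theta>. T \<theta> * U n \<theta>) k + fourier_coeff (\<lambda>\<theta>. T \<theta> * (exp (v \<theta>) - U n \<theta>)) k"
      using fourier_coeff_add[of "\<lambda>\<theta>. T \<theta> * U n \<theta>" "\<lambda>\<theta>. T \<theta> * (exp (v \<theta>) - U n \<theta>)"]
        cont[OF TU] cont[OF T] cont[OF v]
      by (simp add: algebra_simps continuous_intros)
    also have "\<dots> = fourier_coeff (\<lambda>\<theta>. T \<theta> * (exp (v \<theta>) - U n \<theta>)) k"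
      using fourier_coeff_trig_poly_le[OF _ \<open>d < k\<close>] TU by simp
    also have "cmod \<dots> \<le> B * exp_tail r n"
    proof (rule norm_fourier_coeff_le)
      show "continuous_on {-pi..pi} (\<lambda>\<theta>. T \<theta> * (exp (v \<theta>) - U n \<theta>))"
        unfolding U_def using cont[OF T] cont[OF v] by (auto intro!: continuous_intros)
      fix \<theta> :: real assume "\<theta> \<in> {-pi..pi}"
      then show "cmod (T \<theta> * (exp (v \<theta>) - U n \<theta>)) \<le> B * exp_tail r n"
        unfolding norm_mult U_def using B norm_exp_minus_partial_sum_le[OF v_le]
        by (intro mult_mono) auto
    qed
    finally show ?thesis .
  qed
  moreover have "(\<lambda>n. B * exp_tail r n) \<longlonglongrightarrow> 0"
    using tendsto_mult_right_zero[OF exp_tail_tendsto_zero] .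
  ultimately have "cmod (fourier_coeff (\<lambda>\<theta>. T \<theta> * exp (v \<theta>)) k) \<le> 0"
    by (intro tendsto_le[OF trivial_limit_sequentially _ tendsto_const]) auto
  then show ?thesis by simp
qed

lemma norm_fourier_coeff_exp_le:
  assumes w: "trig_poly_le d w" "0 \<le> d" and v: "trig_poly_le 0 v"
    and w_le: "\<And>\<theta>. cmod (w \<theta>) \<le> r" and v_le: "\<And>\<theta>. cmod (v \<theta>) \<le> r"
    and "(int n - 1) * d < k"
  shows "cmod (fourier_coeff (\<lambda>\<theta>. exp (w \<theta> + v \<theta>)) k) \<le> exp_tail r n * exp r"
proof -
  define T where "T \<theta> = (\<Sum>p<n. w \<theta> ^ p /\<^sub>R fact p)" for \<theta>
  have T: "trig_poly_le ((int n - 1) * d) T"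
    unfolding T_def using trig_poly_le_exp_partial_sum[OF w(2,1)] .
  have cont: "continuous_on {-pi..pi} T" "continuous_on {-pi..pi} w" "continuous_on {-pi..pi} v"
    using continuous_on_trig_poly_le T w v by blast+
  have "fourier_coeff (\<lambda>\<theta>. exp (w \<theta> + v \<theta>)) k
      = fourier_coeff (\<lambda>\<theta>. T \<theta> * exp (v \<theta>)) k + fourier_coeff (\<lambda>\<theta>. (exp (w \<theta>) - T \<theta>) * exp (v \<theta>)) k"
    using fourier_coeff_add[of "\<lambda>\<theta>. T \<theta> * exp (v \<theta>)" "\<lambda>\<theta>. (exp (w \<theta>) - T \<theta>) * exp (v \<theta>)"] cont
    by (simp add: algebra_simps exp_add continuous_intros)
  also have "\<dots> = fourier_coeff (\<lambda>\<theta>. (exp (w \<theta>) - T \<theta>) * exp (v \<theta>)) k"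
    using fourier_coeff_mult_exp_eq_0[OF T v \<open>(int n - 1) * d < k\<close> v_le] by simp
  also have "cmod \<dots> \<le> exp_tail r n * exp r"
  proof (rule norm_fourier_coeff_le)
    show "continuous_on {-pi..pi} (\<lambda>\<theta>. (exp (w \<theta>) - T \<theta>) * exp (v \<theta>))"
      using cont by (auto intro!: continuous_intros)
    fix \<theta> :: real
    have "cmod (exp (v \<theta>)) \<le> exp r"
      using complex_Re_le_cmod[of "v \<theta>"] v_le[of \<theta>] by (simp add: norm_exp_eq_Re)
    then show "cmod ((exp (w \<theta>) - T \<theta>) * exp (v \<theta>)) \<le> exp_tail r n * exp r"
      unfolding norm_mult T_def using norm_exp_minus_partial_sum_le[OF w_le]
      by (intro mult_mono) (auto intro: order_trans[OF norm_ge_zero])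
  qed
  finally show ?thesis .
qed

lemma harm_le_ln_plus_one: "1 \<le> m \<Longrightarrow> harm m \<le> ln (real m) + 1"
proof (induction m rule: dec_induct)
  case (step n)
  have "ln (real n / real (Suc n)) \<le> real n / real (Suc n) - 1"
    using step by (intro ln_le_minus_one) auto
  also have "\<dots> = - 1 / real (Suc n)"
    by (simp add: field_simps)
  finally have "1 / real (Suc n) \<le> ln (real (Suc n)) - ln (real n)"
    using step by (simp add: ln_div)
  then show ?case
    using step by (simp add: harm_Suc inverse_eq_divide)
qed (simp add: harm_def)

lemma norm_g_plus_le:
  assumes "1 \<le> m"
  shows "cmod (g_plus m \<xi> \<theta>) \<le> sqrt (ln (real m) + 1) * vec_norm m \<xi>"
proof -
  have "cmod (g_plus m \<xi> \<theta>) \<le> (\<Sum>j=1..m. \<bar>\<xi> j\<bar> * (1 / sqrt (real j)))"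
    unfolding g_plus_def
    by (rule order_trans[OF norm_sum]) (simp add: norm_mult norm_divide norm_exp_eq_Re)
  also have "\<dots> \<le> sqrt ((\<Sum>j=1..m. \<bar>\<xi> j\<bar>\<^sup>2) * (\<Sum>j=1..m. (1 / sqrt (real j))\<^sup>2))"
    by (intro real_le_rsqrt Cauchy_Schwarz_ineq_sum)
  also have "(\<Sum>j=1..m. (1 / sqrt (real j))\<^sup>2) = harm m"
    by (simp add: harm_def power_divide inverse_eq_divide)
  also have "sqrt ((\<Sum>j=1..m. \<bar>\<xi> j\<bar>\<^sup>2) * harm m) \<le> sqrt ((\<Sum>j=1..m. (\<xi> j)\<^sup>2) * (ln (real m) + 1))"
    using harm_le_ln_plus_one[OF assms]
    by (auto intro!: real_sqrt_le_mono mult_left_mono sum_nonneg)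
  also have "\<dots> = sqrt (ln (real m) + 1) * vec_norm m \<xi>"
    by (simp add: vec_norm_def real_sqrt_mult)
  finally show ?thesis .
qed

lemma trig_poly_le_g_plus: "trig_poly_le (int m) (g_plus m \<xi>)"
proof -
  have "trig_poly_le (int m) (\<lambda>\<theta>. \<Sum>j=1..m. complex_of_real (\<xi> j / sqrt (real j)) *
          exp (\<i> * of_int (int j) * complex_of_real \<theta>))"
    by (intro trig_poly_le_sum trig_poly_le_monomial) auto
  then show ?thesis
    unfolding g_plus_def[abs_def] by simp
qed

lemma trig_poly_le_cnj_g_plus: "trig_poly_le 0 (\<lambda>\<theta>. cnj (g_plus m \<xi> \<theta>))"
proof -
  have "trig_poly_le 0 (\<lambda>\<theta>. \<Sum>j=1..m. complex_of_real (\<xi> j / sqrt (real j)) *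
          exp (\<i> * of_int (- int j) * complex_of_real \<theta>))"
    by (intro trig_poly_le_sum trig_poly_le_monomial) auto
  then show ?thesis
    unfolding g_plus_def by (simp add: exp_cnj)
qed

theorem lemma2p2:
  fixes m :: nat and \<xi> :: "nat \<Rightarrow> real" and k :: int and \<rho> :: real
  assumes "m \<ge> 1"
    and "\<rho> = sqrt (ln (real m) + 1) * vec_norm m \<xi>"
    and "k \<ge> 1"
    and "real_of_int k \<ge> 2 * real m * \<rho>"
  shows "cmod (fourier_coeff (\<lambda>\<theta>. complex_of_real (exp (2 * Im (g_plus m \<xi> \<theta>)))) k)
           \<le> 2 * exp \<rho> * \<rho> ^ nat \<lceil>real_of_int k / real m\<rceil> / fact (nat \<lceil>real_of_int k / real m\<rceil>)"
proof -
  define P where "P = g_plus m \<xi>"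
  define N where "N = nat \<lceil>real_of_int k / real m\<rceil>"
  have P_le: "cmod (P \<theta>) \<le> \<rho>" for \<theta>
    unfolding P_def assms(2) using norm_g_plus_le[OF assms(1)] .
  then have "0 \<le> \<rho>"
    using norm_ge_zero order_trans by blast
  have "real_of_int k / real m > 0"
    using assms by auto
  then have N: "int N = \<lceil>real_of_int k / real m\<rceil>"
    unfolding N_def by simp
  have "(real_of_int \<lceil>real_of_int k / real m\<rceil> - 1) * real m < real_of_int k / real m * real m"
    using ceiling_correct[of "real_of_int k / real m"] assms(1) by (intro mult_strict_right_mono) auto
  then have "real_of_int ((int N - 1) * int m) < real_of_int k"
    using N assms(1) by simp
  then have freq: "(int N - 1) * int m < k"
    by (simp only: of_int_less_iff)
  have "2 * \<rho> \<le> real_of_int k / real m"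
    using assms(1,4) by (simp add: field_simps)
  then have "2 * \<rho> \<le> real N"
    by (metis N le_of_int_ceiling of_int_of_nat_eq order_trans)
  have w: "trig_poly_le (int m) (\<lambda>\<theta>. - \<i> * P \<theta>)"
    unfolding P_def by (intro trig_poly_le_scale trig_poly_le_g_plus)
  have v: "trig_poly_le 0 (\<lambda>\<theta>. \<i> * cnj (P \<theta>))"
    unfolding P_def by (intro trig_poly_le_scale trig_poly_le_cnj_g_plus)
  have "- \<i> * P \<theta> + \<i> * cnj (P \<theta>) = complex_of_real (2 * Im (P \<theta>))" for \<theta>
    by (simp add: complex_eq_iff)
  then have "(\<lambda>\<theta>. complex_of_real (exp (2 * Im (P \<theta>)))) = (\<lambda>\<theta>. exp (- \<i> * P \<theta> + \<i> * cnj (P \<theta>)))"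
    by (simp only: exp_of_real)
  then have "cmod (fourier_coeff (\<lambda>\<theta>. complex_of_real (exp (2 * Im (P \<theta>)))) k) \<le> exp_tail \<rho> N * exp \<rho>"
    using norm_fourier_coeff_exp_le[OF w _ v _ _ freq] P_le by (simp add: norm_mult)
  also have "\<dots> \<le> 2 * \<rho> ^ N / fact N * exp \<rho>"
    by (intro mult_right_mono exp_tail_le \<open>0 \<le> \<rho>\<close> \<open>2 * \<rho> \<le> real N\<close>) simp
  finally show ?thesis
    unfolding P_def N_def by (simp add: field_simps)
qed

end
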